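(* For every (possibly stochastic) local policy S-Local there exists a collectible reward decomposition MDP with $n$ rewards and discount factor $\gamma=1-1/\sqrt{n}$ such that $\frac{\text{S-Local}}{\text{OPT}}\le\frac{8}{\sqrt{n}}$, where S-Local denotes the expected value of the policy on that MDP.
   Context: A collectible reward decomposition MDP is an MDP with deterministic dynamics, an initial state $s_0$, discount $\gamma$, and $n$ reward states $s_1,\dots,s_n$; visiting $s_i$ for the first time yields reward $1$ and each reward can be collected only once. For each $j$ there is an option $o_j$ that follows a shortest path to $s_j$ and terminates when collecting it; its value from state $x$ is $V_j(x)=\gamma^{d(x,s_j)}$ where $d$ is shortest-path distance. A local policy is a mapping $\pi(x,h,\{V_i(x)\}_{i=1}^n)\to\Delta(\{o_i\}_{i=1}^n)$ from the current state $x$, the history $h$ of previous steps (including which rewards were collected) and the option values at $x$, to a distribution over options. The value of a policy is its expected discounted return $\mathbb{E}\sum_k\gamma^{T_k}$ ($T_k$ the time the $k$-th reward is collected), and $\text{OPT}=\max_{(i_1,\dots,i_n)}\sum_{j=0}^{n-1}\gamma^{\sum_{t=0}^{j}d_{i_t,i_{t+1}}}$ with $i_0=s_0$. *)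

theory Defs
  imports "HOL-Probability.Probability"
begin

text \<open>
  States are natural numbers; the deterministic dynamics are given by a finite
  set E of transitions (each available action moves from x to y with (x,y) in E).
  The n reward states are rs 0, ..., rs (n-1) (0-based indices), s0 is the initial
  state.
\<close>

type_synonym hist = "(nat \<times> real list \<times> nat \<times> nat set) list"
  \<comment> \<open>one entry per previously executed option: (state where the option was
      chosen, option values there, index of the chosen option, rewards newly
      collected while executing it)\<close>

type_synonym policy = "nat \<Rightarrow> hist \<Rightarrow> real list \<Rightarrow> nat pmf"
  \<comment> \<open>local policy: current state, history, option values at current state
      (V_0(x), ..., V_(n-1)(x)) \<mapsto> distribution over option indices\<close>

definition sdist :: "(nat \<times> nat) set \<Rightarrow> nat \<Rightarrow> nat \<Rightarrow> nat" where
  "sdist E x y = (LEAST k. (x, y) \<in> E ^^ k)"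

definition crd_mdp :: "nat \<Rightarrow> (nat \<times> nat) set \<Rightarrow> nat \<Rightarrow> (nat \<Rightarrow> nat) \<Rightarrow> bool" where
  "crd_mdp n E s0 rs \<longleftrightarrow>
     finite E \<and> inj_on rs {..<n} \<and> s0 \<notin> rs ` {..<n} \<and>
     (\<forall>j<n. (s0, rs j) \<in> E\<^sup>* \<and> (\<forall>i<n. (rs i, rs j) \<in> E\<^sup>*))"

text \<open>Options: nx j x is the next state when following option o_j from x;
  o_j must follow a shortest path to rs j.\<close>
definition shortest_opts ::
  "nat \<Rightarrow> (nat \<times> nat) set \<Rightarrow> (nat \<Rightarrow> nat) \<Rightarrow> (nat \<Rightarrow> nat \<Rightarrow> nat) \<Rightarrow> bool" where
  "shortest_opts n E rs nx \<longleftrightarrow>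
     (\<forall>j<n. \<forall>x. (x, rs j) \<in> E\<^sup>* \<and> x \<noteq> rs j \<longrightarrow>
        (x, nx j x) \<in> E \<and> (nx j x, rs j) \<in> E\<^sup>* \<and>
        sdist E (nx j x) (rs j) + 1 = sdist E x (rs j))"

definition optvals :: "nat \<Rightarrow> real \<Rightarrow> (nat \<times> nat) set \<Rightarrow> (nat \<Rightarrow> nat) \<Rightarrow> nat \<Rightarrow> real list" where
  "optvals n \<gamma> E rs x = map (\<lambda>i. \<gamma> ^ sdist E x (rs i)) [0..<n]"

definition newly :: "nat \<Rightarrow> (nat \<Rightarrow> nat) \<Rightarrow> (nat \<Rightarrow> nat \<Rightarrow> nat) \<Rightarrow> nat \<Rightarrow> nat \<Rightarrow> nat \<Rightarrow> nat set \<Rightarrow> nat set" where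
  "newly n rs nx j x d C = {i. i < n \<and> i \<notin> C \<and> (\<exists>m\<in>{1..d}. (nx j ^^ m) x = rs i)}"

definition first_visit :: "(nat \<Rightarrow> nat) \<Rightarrow> (nat \<Rightarrow> nat \<Rightarrow> nat) \<Rightarrow> nat \<Rightarrow> nat \<Rightarrow> nat \<Rightarrow> nat" where
  "first_visit rs nx j x i = (LEAST m. 1 \<le> m \<and> (nx j ^^ m) x = rs i)"

text \<open>Expected discounted reward collected during the next K option executions,
  starting in state x at time t with history h and collected set C.\<close>
primrec pval :: "nat \<Rightarrow> real \<Rightarrow> (nat \<times> nat) set \<Rightarrow> (nat \<Rightarrow> nat) \<Rightarrow> (nat \<Rightarrow> nat \<Rightarrow> nat)
    \<Rightarrow> policy \<Rightarrow> nat \<Rightarrow> nat \<Rightarrow> hist \<Rightarrow> nat set \<Rightarrow> nat \<Rightarrow> real" where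
  "pval n \<gamma> E rs nx \<pi> 0 x h C t = 0"
| "pval n \<gamma> E rs nx \<pi> (Suc K) x h C t =
     measure_pmf.expectation (\<pi> x h (optvals n \<gamma> E rs x))
       (\<lambda>j. let d = sdist E x (rs j); N = newly n rs nx j x d C in
            (\<Sum>i\<in>N. \<gamma> ^ (t + first_visit rs nx j x i))
            + pval n \<gamma> E rs nx \<pi> K (rs j) (h @ [(x, optvals n \<gamma> E rs x, j, N)]) (C \<union> N) (t + d))"

definition policy_value :: "nat \<Rightarrow> real \<Rightarrow> (nat \<times> nat) set \<Rightarrow> nat \<Rightarrow> (nat \<Rightarrow> nat)
    \<Rightarrow> (nat \<Rightarrow> nat \<Rightarrow> nat) \<Rightarrow> policy \<Rightarrow> real" where
  "policy_value n \<gamma> E s0 rs nx \<pi> = (SUP K. pval n \<gamma> E rs nx \<pi> K s0 [] {} 0)"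

definition tour_state :: "nat \<Rightarrow> (nat \<Rightarrow> nat) \<Rightarrow> nat list \<Rightarrow> nat \<Rightarrow> nat" where
  "tour_state s0 rs xs t = (case t of 0 \<Rightarrow> s0 | Suc k \<Rightarrow> rs (xs ! k))"

definition opt_value :: "nat \<Rightarrow> real \<Rightarrow> (nat \<times> nat) set \<Rightarrow> nat \<Rightarrow> (nat \<Rightarrow> nat) \<Rightarrow> real" where
  "opt_value n \<gamma> E s0 rs =
     Max ((\<lambda>xs. \<Sum>j<n. \<gamma> ^ (\<Sum>t\<le>j. sdist E (tour_state s0 rs xs t) (tour_state s0 rs xs (Suc t))))
          ` {xs. distinct xs \<and> set xs = {..<n}})"

end

theory Submission
  imports Defs
begin

text \<open>
  The hard instance hides a block of about \<open>\<surd>n\<close> rewards that are chained into a path, while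
  every other pair of rewards is separated by a long detour; from the start all rewards are at
  distance 1. A local policy therefore sees identical option values at the first decision and
  cannot tell where the block is: placing the block where its first choice puts probability
  \<open>O(1/\<surd>n)\<close>, its value stays below \<open>4\<gamma>\<close>, since away from the block it can collect only one
  reward before the discount \<open>\<gamma>\<^sup>M\<close> of the detour makes everything else negligible. The optimal
  tour walks along the block first and earns \<open>\<Sum>j<m. \<gamma>^(j+1) \<ge> \<gamma>\<surd>n/2\<close> for
  \<open>\<gamma> = 1 - 1/\<surd>n\<close> and \<open>m \<ge> \<surd>n\<close>.
\<close>

lemma sdist_le_relpow: "(x, y) \<in> E ^^ k \<Longrightarrow> sdist E x y \<le> k"
  unfolding sdist_def by (rule Least_le)

lemma sdist_relpow: "(x, y) \<in> E\<^sup>* \<Longrightarrow> (x, y) \<in> E ^^ sdist E x y"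
  unfolding sdist_def using rtrancl_power by (metis LeastI_ex)

lemma sdist_self: "sdist E x x = 0"
  using sdist_le_relpow[of x x 0 E] by simp

lemma sdist_eq_0D: "(x, y) \<in> E\<^sup>* \<Longrightarrow> sdist E x y = 0 \<Longrightarrow> x = y"
  using sdist_relpow[of x y E] by simp

lemma sdist_triangle:
  "(x, y) \<in> E\<^sup>* \<Longrightarrow> (y, z) \<in> E\<^sup>* \<Longrightarrow> sdist E x z \<le> sdist E x y + sdist E y z"
  using sdist_relpow[of x y E] sdist_relpow[of y z E] relpow_add[of "sdist E x y" "sdist E y z" E]
  by (intro sdist_le_relpow) auto

lemma shortest_opts_iterate:
  assumes so: "shortest_opts n E rs nx" and j: "j < n" and r: "(x, rs j) \<in> E\<^sup>*"
    and "m \<le> sdist E x (rs j)"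
  shows "(x, (nx j ^^ m) x) \<in> E ^^ m \<and> ((nx j ^^ m) x, rs j) \<in> E\<^sup>*
          \<and> sdist E ((nx j ^^ m) x) (rs j) = sdist E x (rs j) - m"
  using assms(4)
proof (induction m)
  case 0
  then show ?case using r by simp
next
  case (Suc m)
  let ?y = "(nx j ^^ m) x"
  from Suc have IH: "(x, ?y) \<in> E ^^ m" "(?y, rs j) \<in> E\<^sup>*"
    "sdist E ?y (rs j) = sdist E x (rs j) - m"
    by auto
  have "?y \<noteq> rs j" using IH(3) Suc.prems sdist_self[of E "rs j"] by auto
  then have "(?y, nx j ?y) \<in> E" "(nx j ?y, rs j) \<in> E\<^sup>*"
    "sdist E (nx j ?y) (rs j) + 1 = sdist E ?y (rs j)"
    using so j IH(2) unfolding shortest_opts_def by blast+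
  then show ?case using IH Suc.prems by auto
qed

lemma sdist_le_first_visit:
  assumes so: "shortest_opts n E rs nx" and j: "j < n" and r: "(x, rs j) \<in> E\<^sup>*"
    and i: "i \<in> newly n rs nx j x (sdist E x (rs j)) C"
  shows "sdist E x (rs i) \<le> first_visit rs nx j x i"
proof -
  from i obtain m where m: "m \<in> {1..sdist E x (rs j)}" "(nx j ^^ m) x = rs i"
    unfolding newly_def by auto
  let ?m0 = "first_visit rs nx j x i"
  have m0: "1 \<le> ?m0 \<and> (nx j ^^ ?m0) x = rs i" unfolding first_visit_def
    by (rule LeastI[of _ m]) (use m in auto)
  have "?m0 \<le> m" unfolding first_visit_def by (rule Least_le) (use m in auto)
  then have "(x, (nx j ^^ ?m0) x) \<in> E ^^ ?m0"
    using shortest_opts_iterate[OF so j r, of ?m0] m by auto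
  then show ?thesis using m0 sdist_le_relpow by metis
qed

lemma pmf_expectation_le_sum:
  fixes f g :: "nat \<Rightarrow> real"
  assumes "set_pmf p \<subseteq> {..<n}" "\<And>j. j < n \<Longrightarrow> f j \<le> g j"
  shows "measure_pmf.expectation p f \<le> (\<Sum>j<n. g j * pmf p j)"
proof -
  have "measure_pmf.expectation p f = (\<Sum>j<n. f j * pmf p j)"
    by (rule integral_measure_pmf_real) (use assms(1) in auto)
  also have "\<dots> \<le> (\<Sum>j<n. g j * pmf p j)"
    by (intro sum_mono mult_right_mono) (auto intro: assms(2))
  finally show ?thesis .
qed

lemma discounted_first_visits_le:
  fixes \<gamma> :: real
  assumes "0 \<le> \<gamma>" "\<gamma> \<le> 1" and so: "shortest_opts n E rs nx" and j: "j < n"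
    and r: "(x, rs j) \<in> E\<^sup>*"
  shows "(\<Sum>i\<in>newly n rs nx j x (sdist E x (rs j)) C. \<gamma> ^ (t + first_visit rs nx j x i))
    \<le> (\<Sum>i\<in>newly n rs nx j x (sdist E x (rs j)) C. \<gamma> ^ (t + sdist E x (rs i)))"
  using sdist_le_first_visit[OF so j r] assms(1,2) by (intro sum_mono power_decreasing) auto

text \<open>No reward can be collected before its distance from the current state has elapsed.\<close>

lemma pval_le_discounted_dists:
  fixes \<gamma> :: real
  assumes g0: "0 \<le> \<gamma>" and g1: "\<gamma> \<le> 1" and so: "shortest_opts n E rs nx"
    and pol: "\<forall>x h v. set_pmf (\<pi> x h v) \<subseteq> {..<n}"
    and rr: "\<forall>i<n. \<forall>j<n. (rs i, rs j) \<in> E\<^sup>*"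
    and "\<forall>i<n. (x, rs i) \<in> E\<^sup>*"
  shows "pval n \<gamma> E rs nx \<pi> K x h C t \<le> (\<Sum>i\<in>{..<n}-C. \<gamma> ^ (t + sdist E x (rs i)))"
  using assms(6)
proof (induction K arbitrary: x h C t)
  case 0
  then show ?case using g0 by (simp add: sum_nonneg)
next
  case (Suc K)
  let ?bound = "\<Sum>i\<in>{..<n}-C. \<gamma> ^ (t + sdist E x (rs i))"
  have "pval n \<gamma> E rs nx \<pi> (Suc K) x h C t \<le> (\<Sum>j<n. ?bound * pmf (\<pi> x h (optvals n \<gamma> E rs x)) j)"
    unfolding pval.simps
  proof (rule pmf_expectation_le_sum[OF pol[rule_format]])
    fix j assume j: "j < n"
    define d where "d = sdist E x (rs j)"
    define N where "N = newly n rs nx j x d C"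
    have xr: "(x, rs j) \<in> E\<^sup>*" using Suc.prems j by auto
    have "pval n \<gamma> E rs nx \<pi> K (rs j) (h @ [(x, optvals n \<gamma> E rs x, j, N)]) (C \<union> N) (t + d)
       \<le> (\<Sum>i\<in>{..<n}-(C \<union> N). \<gamma> ^ (t + d + sdist E (rs j) (rs i)))"
      using Suc.IH rr j by blast
    also have "{..<n}-(C \<union> N) = {..<n}-C-N" by blast
    also have "(\<Sum>i\<in>{..<n}-C-N. \<gamma> ^ (t + d + sdist E (rs j) (rs i)))
        \<le> (\<Sum>i\<in>{..<n}-C-N. \<gamma> ^ (t + sdist E x (rs i)))"
    proof (rule sum_mono)
      fix i assume "i \<in> {..<n}-C-N"
      then have "sdist E x (rs i) \<le> d + sdist E (rs j) (rs i)"
        unfolding d_def using sdist_triangle[OF xr] rr j by auto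
      then show "\<gamma> ^ (t + d + sdist E (rs j) (rs i)) \<le> \<gamma> ^ (t + sdist E x (rs i))"
        using g0 g1 by (intro power_decreasing) auto
    qed
    finally have rest: "pval n \<gamma> E rs nx \<pi> K (rs j) (h @ [(x, optvals n \<gamma> E rs x, j, N)]) (C \<union> N) (t + d)
        \<le> (\<Sum>i\<in>{..<n}-C-N. \<gamma> ^ (t + sdist E x (rs i)))" .
    have "N \<subseteq> {..<n} - C" unfolding N_def newly_def by auto
    then have "?bound = (\<Sum>i\<in>{..<n}-C-N. \<gamma> ^ (t + sdist E x (rs i))) + (\<Sum>i\<in>N. \<gamma> ^ (t + sdist E x (rs i)))"
      by (rule sum.subset_diff) simp
    then show "(let d = sdist E x (rs j); N = newly n rs nx j x d C in
            (\<Sum>i\<in>N. \<gamma> ^ (t + first_visit rs nx j x i))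
            + pval n \<gamma> E rs nx \<pi> K (rs j) (h @ [(x, optvals n \<gamma> E rs x, j, N)]) (C \<union> N) (t + d))
          \<le> ?bound"
      using discounted_first_visits_le[OF g0 g1 so j xr, where C = C and t = t] rest
      unfolding Let_def d_def[symmetric] N_def[symmetric] by linarith
  qed
  also have "\<dots> = ?bound"
    using sum_pmf_eq_1[OF _ pol[rule_format]] by (simp add: sum_distrib_left[symmetric])
  finally show ?case .
qed

lemma potential_relpow_le:
  fixes f :: "'a \<Rightarrow> nat"
  assumes "\<And>a b. (a, b) \<in> E \<Longrightarrow> f b \<le> f a + 1"
  shows "(x, y) \<in> E ^^ k \<Longrightarrow> f y \<le> f x + k"
proof (induction k arbitrary: y)
  case 0 then show ?case by simp
next
  case (Suc k)
  then obtain z where "(x, z) \<in> E ^^ k" "(z, y) \<in> E" by auto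
  then show ?case using Suc.IH assms by fastforce
qed

text \<open>Vertex \<open>0\<close> is the start and \<open>Suc i\<close> is reward \<open>i\<close>.\<close>

definition hidden_block_graph :: "nat \<Rightarrow> nat \<Rightarrow> nat \<Rightarrow> nat \<Rightarrow> (nat \<times> nat) set" where
  "hidden_block_graph n M lo m = {(0, Suc i) | i. i < n} \<union> {(Suc i, Suc n) | i. i < n}
     \<union> {(n + k, Suc (n + k)) | k. 1 \<le> k \<and> k < M} \<union> {(n + M, 0)}
     \<union> {(Suc a, Suc (Suc a)) | a. lo \<le> a \<and> Suc a < lo + m}"

lemma finite_hidden_block_graph: "finite (hidden_block_graph n M lo m)"
proof -
  have "hidden_block_graph n M lo m \<subseteq> (\<lambda>i. (0, Suc i)) ` {..<n} \<union> (\<lambda>i. (Suc i, Suc n)) ` {..<n}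
      \<union> (\<lambda>k. (n + k, Suc (n + k))) ` {..<M} \<union> {(n + M, 0)}
      \<union> (\<lambda>a. (Suc a, Suc (Suc a))) ` {..<lo + m}"
    unfolding hidden_block_graph_def by auto
  then show ?thesis by (rule finite_subset) simp
qed

lemma hidden_block_graph_start: "i < n \<Longrightarrow> (0, Suc i) \<in> hidden_block_graph n M lo m"
  unfolding hidden_block_graph_def by auto

lemma hidden_block_graph_return_path:
  "1 \<le> k \<Longrightarrow> k \<le> M \<Longrightarrow> (Suc n, n + k) \<in> (hidden_block_graph n M lo m)\<^sup>*"
proof (induction k)
  case 0 then show ?case by simp
next
  case (Suc k)
  show ?case
  proof (cases "k = 0")
    case True then show ?thesis by simp
  next
    case False
    then have "(Suc n, n + k) \<in> (hidden_block_graph n M lo m)\<^sup>*" using Suc by auto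
    moreover have "(n + k, n + Suc k) \<in> hidden_block_graph n M lo m"
      using False Suc.prems unfolding hidden_block_graph_def by auto
    ultimately show ?thesis by (rule rtrancl_into_rtrancl)
  qed
qed

lemma hidden_block_graph_return:
  assumes "1 \<le> M" "i < n" shows "(Suc i, 0) \<in> (hidden_block_graph n M lo m)\<^sup>*"
proof -
  have "(Suc i, Suc n) \<in> hidden_block_graph n M lo m"
    using assms unfolding hidden_block_graph_def by auto
  moreover have "(Suc n, n + M) \<in> (hidden_block_graph n M lo m)\<^sup>*"
    using hidden_block_graph_return_path assms by auto
  moreover have "(n + M, 0) \<in> hidden_block_graph n M lo m" unfolding hidden_block_graph_def by auto
  ultimately show ?thesis by (meson converse_rtrancl_into_rtrancl rtrancl_into_rtrancl)
qed

lemma crd_mdp_hidden_block_graph: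
  assumes "1 \<le> M" shows "crd_mdp n (hidden_block_graph n M lo m) 0 Suc"
  unfolding crd_mdp_def
proof (intro conjI allI impI)
  show "finite (hidden_block_graph n M lo m)" by (rule finite_hidden_block_graph)
  show "inj_on Suc {..<n}" by simp
  show "0 \<notin> Suc ` {..<n}" by auto
  fix j assume j: "j < n"
  show "(0, Suc j) \<in> (hidden_block_graph n M lo m)\<^sup>*" using hidden_block_graph_start[OF j] by auto
  fix i assume i: "i < n"
  show "(Suc i, Suc j) \<in> (hidden_block_graph n M lo m)\<^sup>*"
    using hidden_block_graph_return[OF assms i] hidden_block_graph_start[OF j, of M lo m]
    by (meson rtrancl_into_rtrancl)
qed

lemma sdist_hidden_block_graph_start:
  assumes "i < n" shows "sdist (hidden_block_graph n M lo m) 0 (Suc i) = 1"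
proof -
  have "sdist (hidden_block_graph n M lo m) 0 (Suc i) \<le> 1"
    using hidden_block_graph_start[OF assms] by (intro sdist_le_relpow) auto
  moreover have "sdist (hidden_block_graph n M lo m) 0 (Suc i) \<noteq> 0"
    using sdist_eq_0D[of 0 "Suc i" "hidden_block_graph n M lo m"]
      hidden_block_graph_start[OF assms, of M lo m] by auto
  ultimately show ?thesis by simp
qed

lemma optvals_hidden_block_graph_start:
  "optvals n \<gamma> (hidden_block_graph n M lo m) Suc 0 = map (\<lambda>_. \<gamma>) [0..<n]"
  unfolding optvals_def using sdist_hidden_block_graph_start by (intro map_cong) auto

text \<open>A lower bound for the distance from reward \<open>j\<close> to \<open>y\<close>.\<close>

definition block_potential :: "nat \<Rightarrow> nat \<Rightarrow> nat \<Rightarrow> nat \<Rightarrow> nat \<Rightarrow> nat \<Rightarrow> nat" where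
  "block_potential n M lo m j y =
     (if y = Suc j then 0
      else if Suc n \<le> y \<and> y \<le> n + M then y - n
      else if y = 0 then M + 1
      else if j \<in> {lo..<lo+m} \<and> 1 \<le> y \<and> y - 1 \<in> {lo..<lo+m} then 1
      else M + 2)"

lemma block_potential_edge:
  assumes "1 \<le> M" "lo + m \<le> n" "j < n" and e: "(a, b) \<in> hidden_block_graph n M lo m"
  shows "block_potential n M lo m j b \<le> block_potential n M lo m j a + 1"
proof -
  let ?f = "block_potential n M lo m j"
  have "?f y \<le> M + 2" for y unfolding block_potential_def by auto
  moreover have "?f 0 = M + 1" unfolding block_potential_def by simp
  moreover have "?f y = y - n" if "Suc n \<le> y" "y \<le> n + M" for y
    using that assms(3) unfolding block_potential_def by simp
  moreover have "?f b \<le> 1" if "j \<in> {lo..<lo+m}" "b = Suc (Suc c)" "Suc c < lo + m" "lo \<le> c" for c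
    using that assms(2) unfolding block_potential_def by simp
  moreover have "?f (Suc c) = M + 2" if "j \<notin> {lo..<lo+m}" "c < n" "lo \<le> c" "c < lo + m" for c
    using that unfolding block_potential_def by auto
  ultimately show ?thesis
    using e assms(1,2) unfolding hidden_block_graph_def by auto (force+)
qed

lemma sdist_hidden_block_graph_ge:
  assumes M: "1 \<le> M" and lom: "lo + m \<le> n" and "i < n" "j < n" "i \<noteq> j"
  shows "sdist (hidden_block_graph n M lo m) (Suc j) (Suc i) \<ge>
     (if j \<in> {lo..<lo+m} \<and> i \<in> {lo..<lo+m} then 1 else M + 2)"
proof -
  have r: "(Suc j, Suc i) \<in> (hidden_block_graph n M lo m)\<^sup>*"
    using crd_mdp_hidden_block_graph[OF M] assms unfolding crd_mdp_def by auto
  have "block_potential n M lo m j (Suc i)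
      \<le> block_potential n M lo m j (Suc j) + sdist (hidden_block_graph n M lo m) (Suc j) (Suc i)"
    by (rule potential_relpow_le[OF block_potential_edge[OF M lom \<open>j < n\<close>] sdist_relpow[OF r]])
  then show ?thesis using assms unfolding block_potential_def by auto
qed

lemma sum_discounted_dists_from_reward_le:
  fixes \<gamma> :: real
  assumes M: "1 \<le> M" and lom: "lo + m \<le> n" and g0: "0 \<le> \<gamma>" and g1: "\<gamma> \<le> 1"
    and nM: "real n * \<gamma> ^ M \<le> 1" and a: "a < n"
  shows "(\<Sum>i\<in>{..<n}-{a}. \<gamma> ^ (1 + sdist (hidden_block_graph n M lo m) (Suc a) (Suc i)))
    \<le> \<gamma> + (if a \<in> {lo..<lo+m} then real (m - 1) * \<gamma> else 0)"
proof -
  let ?G = "hidden_block_graph n M lo m"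
  let ?A = "{lo..<lo+m}"
  define B where "B = (if a \<in> ?A then ?A - {a} else {})"
  have summand: "\<gamma> ^ (1 + sdist ?G (Suc a) (Suc i)) \<le> (if i \<in> B then \<gamma> else 0) + \<gamma> * \<gamma> ^ M"
    if i: "i \<in> {..<n}-{a}" for i
  proof (cases "i \<in> B")
    case True
    have "\<gamma> ^ (1 + sdist ?G (Suc a) (Suc i)) \<le> \<gamma>"
      using g0 g1 by (simp add: power_le_one mult_left_le)
    moreover have "0 \<le> \<gamma> * \<gamma> ^ M" using g0 by simp
    ultimately show ?thesis using True by simp
  next
    case False
    then have "M + 2 \<le> sdist ?G (Suc a) (Suc i)"
      using sdist_hidden_block_graph_ge[OF M lom, of i a] i a unfolding B_def by (auto split: if_splits)
    then have "\<gamma> ^ (1 + sdist ?G (Suc a) (Suc i)) \<le> \<gamma> ^ Suc M"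
      using g0 g1 by (intro power_decreasing) auto
    then show ?thesis using False by simp
  qed
  have "(\<Sum>i\<in>{..<n}-{a}. \<gamma> ^ (1 + sdist ?G (Suc a) (Suc i)))
      \<le> (\<Sum>i\<in>{..<n}-{a}. (if i \<in> B then \<gamma> else 0)) + (\<Sum>i\<in>{..<n}-{a}. \<gamma> * \<gamma> ^ M)"
    unfolding sum.distrib[symmetric] by (rule sum_mono) (rule summand)
  also have "(\<Sum>i\<in>{..<n}-{a}. (if i \<in> B then \<gamma> else 0)) = real (card B) * \<gamma>"
  proof -
    have "B \<subseteq> {..<n}-{a}" using lom unfolding B_def by auto
    then show ?thesis by (simp add: sum.If_cases Int_absorb1)
  qed
  also have "(\<Sum>i\<in>{..<n}-{a}. \<gamma> * \<gamma> ^ M) \<le> (\<Sum>i<n. \<gamma> * \<gamma> ^ M)"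
    by (rule sum_mono2) (use g0 in auto)
  also have "\<dots> = \<gamma> * (real n * \<gamma> ^ M)" by simp
  also have "\<dots> \<le> \<gamma>" using nM g0 by (simp add: mult_left_le)
  also have "real (card B) = (if a \<in> ?A then real (m - 1) else 0)" unfolding B_def by simp
  finally show ?thesis by (auto simp: add.commute of_nat_diff)
qed

text \<open>The first option of any policy collects exactly the chosen reward at time 1; afterwards the
  bound of pval_le_discounted_dists applies.\<close>

lemma first_option_value_le:
  fixes \<gamma> :: real
  assumes M: "1 \<le> M" and lom: "lo + m \<le> n" and g0: "0 \<le> \<gamma>" and g1: "\<gamma> \<le> 1"
    and so: "shortest_opts n (hidden_block_graph n M lo m) Suc nx"
    and pol: "\<forall>x h v. set_pmf (\<pi> x h v) \<subseteq> {..<n}"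
    and nM: "real n * \<gamma> ^ M \<le> 1" and a: "a < n"
  shows "(let d = sdist (hidden_block_graph n M lo m) 0 (Suc a); N = newly n Suc nx a 0 d {} in
            (\<Sum>i\<in>N. \<gamma> ^ (0 + first_visit Suc nx a 0 i))
            + pval n \<gamma> (hidden_block_graph n M lo m) Suc nx \<pi> K (Suc a) (h @ [(0, v, a, N)]) ({} \<union> N) (0 + d))
         \<le> 2 * \<gamma> + (if a \<in> {lo..<lo+m} then real (m - 1) * \<gamma> else 0)"
proof -
  let ?G = "hidden_block_graph n M lo m"
  have crd: "crd_mdp n ?G 0 Suc" by (rule crd_mdp_hidden_block_graph[OF M])
  then have rr: "\<forall>i<n. \<forall>j<n. (Suc i, Suc j) \<in> ?G\<^sup>*" unfolding crd_mdp_def by auto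
  have d: "sdist ?G 0 (Suc a) = 1" by (rule sdist_hidden_block_graph_start[OF a])
  have "(0, Suc a) \<in> ?G\<^sup>*" using crd a unfolding crd_mdp_def by auto
  then have "nx a 0 = Suc a"
    using shortest_opts_iterate[OF so a, of 0 1] d sdist_eq_0D by auto
  then have N: "newly n Suc nx a 0 1 {} = {a}" and fv: "first_visit Suc nx a 0 a = 1"
    unfolding newly_def first_visit_def using a by (auto intro: Least_equality)
  have "pval n \<gamma> ?G Suc nx \<pi> K (Suc a) (h @ [(0, v, a, {a})]) {a} 1
      \<le> (\<Sum>i\<in>{..<n}-{a}. \<gamma> ^ (1 + sdist ?G (Suc a) (Suc i)))"
    using pval_le_discounted_dists[OF g0 g1 so pol rr] rr a by blast
  also have "\<dots> \<le> \<gamma> + (if a \<in> {lo..<lo+m} then real (m - 1) * \<gamma> else 0)"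
    by (rule sum_discounted_dists_from_reward_le[OF M lom g0 g1 nM a])
  finally show ?thesis unfolding Let_def d N using fv by simp
qed

lemma policy_value_hidden_block_graph_le:
  fixes \<gamma> :: real
  assumes M: "1 \<le> M" and lom: "lo + m \<le> n" and g0: "0 \<le> \<gamma>" and g1: "\<gamma> \<le> 1"
    and so: "shortest_opts n (hidden_block_graph n M lo m) Suc nx"
    and pol: "\<forall>x h v. set_pmf (\<pi> x h v) \<subseteq> {..<n}"
    and nM: "real n * \<gamma> ^ M \<le> 1"
    and light: "real (m - 1) * (\<Sum>a\<in>{lo..<lo+m}. pmf (\<pi> 0 [] (map (\<lambda>_. \<gamma>) [0..<n])) a) \<le> 2"
  shows "policy_value n \<gamma> (hidden_block_graph n M lo m) 0 Suc nx \<pi> \<le> 4 * \<gamma>"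
  unfolding policy_value_def
proof (rule cSUP_least)
  fix K
  let ?A = "{lo..<lo+m}"
  let ?p = "\<pi> 0 [] (map (\<lambda>_. \<gamma>) [0..<n])"
  show "pval n \<gamma> (hidden_block_graph n M lo m) Suc nx \<pi> K 0 [] {} 0 \<le> 4 * \<gamma>"
  proof (cases K)
    case 0
    then show ?thesis using g0 by simp
  next
    case (Suc K')
    have "pval n \<gamma> (hidden_block_graph n M lo m) Suc nx \<pi> K 0 [] {} 0
        \<le> (\<Sum>a<n. (2 * \<gamma> + (if a \<in> ?A then real (m - 1) * \<gamma> else 0)) * pmf ?p a)"
      unfolding Suc pval.simps optvals_hidden_block_graph_start
      by (rule pmf_expectation_le_sum[OF pol[rule_format]])
        (rule first_option_value_le[OF M lom g0 g1 so pol nM])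
    also have "\<dots> = (\<Sum>a<n. 2 * \<gamma> * pmf ?p a + \<gamma> * real (m - 1) * (if a \<in> ?A then pmf ?p a else 0))"
      by (rule sum.cong) (auto simp: algebra_simps)
    also have "\<dots> = 2 * \<gamma> * (\<Sum>a<n. pmf ?p a) + \<gamma> * real (m - 1) * (\<Sum>a\<in>{..<n} \<inter> ?A. pmf ?p a)"
      by (simp add: sum.distrib sum_distrib_left sum.inter_restrict)
    also have "{..<n} \<inter> ?A = ?A" using lom by auto
    also have "2 * \<gamma> * (\<Sum>a<n. pmf ?p a) + \<gamma> * real (m - 1) * (\<Sum>a\<in>?A. pmf ?p a) \<le> 2 * \<gamma> + \<gamma> * 2"
      using sum_pmf_eq_1[OF _ pol[rule_format]] mult_left_mono[OF light g0] by (simp add: mult.assoc)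
    finally show ?thesis by simp
  qed
qed simp

text \<open>The optimal tour visits the block first, one edge per reward.\<close>

lemma opt_value_hidden_block_graph_ge:
  fixes \<gamma> :: real
  assumes lom: "lo + m \<le> n" and g0: "0 \<le> \<gamma>" and g1: "\<gamma> \<le> 1"
  shows "(\<Sum>j<m. \<gamma> ^ Suc j) \<le> opt_value n \<gamma> (hidden_block_graph n M lo m) 0 Suc"
proof -
  let ?G = "hidden_block_graph n M lo m"
  define xs where "xs = [lo..<lo+m] @ filter (\<lambda>i. i \<notin> {lo..<lo+m}) [0..<n]"
  let ?ts = "tour_state 0 Suc xs"
  have tour: "distinct xs \<and> set xs = {..<n}" unfolding xs_def using lom by auto
  have fin: "finite {xs. distinct xs \<and> set xs = {..<n}}"
    by (rule finite_subset[OF _ finite_subset_distinct[of "{..<n}"]]) auto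
  have step: "sdist ?G (?ts t) (?ts (Suc t)) \<le> 1" if t: "t < m" for t
  proof -
    have "?ts (Suc t) = Suc (lo + t)" unfolding tour_state_def xs_def using t by (simp add: nth_append)
    moreover have "(?ts t, Suc (lo + t)) \<in> ?G"
    proof (cases t)
      case 0
      then show ?thesis unfolding tour_state_def hidden_block_graph_def using t lom by auto
    next
      case (Suc t')
      then have "?ts t = Suc (lo + t')" unfolding tour_state_def xs_def using t by (simp add: nth_append)
      then show ?thesis unfolding hidden_block_graph_def using t Suc by auto
    qed
    ultimately show ?thesis by (intro sdist_le_relpow) auto
  qed
  have "(\<Sum>j<m. \<gamma> ^ Suc j) \<le> (\<Sum>j<m. \<gamma> ^ (\<Sum>t\<le>j. sdist ?G (?ts t) (?ts (Suc t))))"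
  proof (rule sum_mono)
    fix j assume "j \<in> {..<m}"
    then have "(\<Sum>t\<le>j. sdist ?G (?ts t) (?ts (Suc t))) \<le> (\<Sum>t\<le>j. 1)"
      by (intro sum_mono step) auto
    then show "\<gamma> ^ Suc j \<le> \<gamma> ^ (\<Sum>t\<le>j. sdist ?G (?ts t) (?ts (Suc t)))"
      using g0 g1 by (intro power_decreasing) auto
  qed
  also have "\<dots> \<le> (\<Sum>j<n. \<gamma> ^ (\<Sum>t\<le>j. sdist ?G (?ts t) (?ts (Suc t))))"
    by (rule sum_mono2) (use lom g0 in auto)
  also have "\<dots> \<le> opt_value n \<gamma> ?G 0 Suc"
    unfolding opt_value_def by (rule Max_ge) (use fin tour in auto)
  finally show ?thesis .
qed

lemma discount_pow_le_half:
  fixes n m :: nat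
  assumes "1 \<le> n" and "n \<le> m * m"
  shows "(1 - 1 / sqrt n) ^ m \<le> 1 / 2"
proof -
  have s1: "1 \<le> sqrt n" using assms(1) by simp
  have "1 - 1 / sqrt n \<le> exp (- (1 / sqrt n))" using exp_ge_add_one_self[of "- (1 / sqrt n)"] by simp
  then have "(1 - 1 / sqrt n) ^ m \<le> exp (- (1 / sqrt n)) ^ m"
    using s1 by (intro power_mono) (auto simp: field_simps)
  also have "\<dots> = exp (- (real m / sqrt n))" by (simp add: exp_of_nat_mult[symmetric])
  also have "\<dots> \<le> exp (-1)"
  proof -
    have "sqrt n \<le> sqrt (real m * real m)"
      using assms(2) by (intro real_sqrt_le_mono) (metis of_nat_le_iff of_nat_mult)
    then have "1 \<le> real m / sqrt n" using s1 by (simp add: field_simps)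
    then show ?thesis by simp
  qed
  also have "\<dots> \<le> 1 / 2"
    using exp_ge_add_one_self[of "1::real"] by (simp add: exp_minus field_simps)
  finally show ?thesis .
qed

lemma discount_sum_ge:
  fixes n m :: nat
  defines "\<gamma> \<equiv> 1 - 1 / sqrt n"
  assumes "1 \<le> n" and "n \<le> m * m"
  shows "\<gamma> * sqrt n / 2 \<le> (\<Sum>j<m. \<gamma> ^ Suc j)"
proof -
  have s1: "1 \<le> sqrt n" using assms(2) by simp
  have g0: "0 \<le> \<gamma>" unfolding \<gamma>_def using s1 by (simp add: field_simps)
  have "1 / 2 * sqrt n \<le> (1 - \<gamma> ^ m) * sqrt n"
    using discount_pow_le_half[OF assms(2,3)] unfolding \<gamma>_def[symmetric] by (intro mult_right_mono) auto
  then have "\<gamma> * sqrt n / 2 \<le> \<gamma> * ((1 - \<gamma> ^ m) * sqrt n)"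
    using g0 mult_left_mono by fastforce
  also have "\<dots> = \<gamma> * (\<Sum>j<m. \<gamma> ^ j)"
    using sum_gp_strict[of \<gamma> m] s1 unfolding \<gamma>_def by simp
  also have "\<dots> = (\<Sum>j<m. \<gamma> ^ Suc j)" by (simp add: sum_distrib_left)
  finally show ?thesis .
qed

text \<open>The block length \<open>m = \<lceil>\<surd>n\<rceil>\<close> and the number \<open>k = \<lfloor>n/m\<rfloor>\<close> of disjoint blocks
  satisfy \<open>m - 1 \<le> 2k\<close>, because \<open>(m - 1)\<^sup>2 < n < (k + 1) m\<close>.\<close>

lemma exists_sqrt_block_partition:
  fixes n :: nat
  assumes n: "1 \<le> n"
  obtains m k where "1 \<le> k" "k * m \<le> n" "n \<le> m * m" "m - 1 \<le> 2 * k"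
proof -
  define m where "m = (LEAST m. n \<le> m * m)"
  define k where "k = n div m"
  have nm: "n \<le> m * m" unfolding m_def by (rule LeastI[of _ n]) (use n in simp)
  have m0: "0 < m" using nm n by (cases m) auto
  have "m \<le> n" unfolding m_def by (rule Least_le) (use n in simp)
  then have k: "1 \<le> k" unfolding k_def using m0 by (simp add: Suc_le_eq div_greater_zero_iff)
  have mm: "(m - 1) * (m - 1) < n"
    using not_less_Least[of "m - 1" "\<lambda>m. n \<le> m * m"] m0 unfolding m_def[symmetric] by simp
  have "m - 1 \<le> 2 * k"
  proof (rule ccontr)
    assume "\<not> m - 1 \<le> 2 * k"
    then have big: "2 * k + 2 \<le> m" by simp
    have "n < (k + 1) * m" unfolding k_def using m0
      by (metis add.commute div_mult_mod_eq mod_less_divisor mult_Suc nat_add_left_cancel_less plus_1_eq_Suc)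
    then have "2 * ((m - 1) * (m - 1)) < m * m"
      using mm mult_right_mono[OF big, of m] by simp
    moreover obtain q where "m = q + 4"
      using big k le_Suc_ex[of 4 m] by (auto simp: add.commute)
    ultimately show False by (simp add: algebra_simps)
  qed
  moreover have "k * m \<le> n" unfolding k_def by simp
  ultimately show thesis using that k nm by blast
qed

lemma exists_pow_le_inverse:
  fixes \<gamma> :: real
  assumes "0 \<le> \<gamma>" "\<gamma> < 1" "1 \<le> n"
  obtains M where "1 \<le> M" "real n * \<gamma> ^ M \<le> 1"
proof -
  obtain M0 where "\<gamma> ^ M0 < 1 / real n" using real_arch_pow_inv[of "1 / real n" \<gamma>] assms by auto
  then have "real n * \<gamma> ^ M0 \<le> 1" using assms(3) by (simp add: field_simps)
  moreover have "\<gamma> ^ Suc M0 \<le> \<gamma> ^ M0" using assms by (intro power_decreasing) auto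
  ultimately have "real n * \<gamma> ^ Suc M0 \<le> 1"
    by (meson mult_left_mono of_nat_0_le_iff order_trans)
  then show thesis using that[of "Suc M0"] by simp
qed

lemma exists_light_block:
  fixes p :: "nat pmf"
  assumes k: "1 \<le> k" and km: "k * m \<le> n" and sp: "set_pmf p \<subseteq> {..<n}"
  obtains lo where "lo + m \<le> n" "(\<Sum>a\<in>{lo..<lo+m}. pmf p a) \<le> 1 / real k"
proof -
  have "\<exists>b<k. (\<Sum>a\<in>{b*m..<b*m+m}. pmf p a) \<le> 1 / real k"
  proof (rule ccontr)
    assume "\<not> ?thesis"
    then have "(\<Sum>b<k. 1 / real k) < (\<Sum>b<k. (\<Sum>a\<in>{b*m..<b*m+m}. pmf p a))"
      using k by (intro sum_strict_mono) (auto simp: lessThan_empty_iff)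
    also have "\<dots> = (\<Sum>a<k*m. pmf p a)" by (rule sum.nat_group)
    also have "\<dots> \<le> (\<Sum>a<n. pmf p a)" by (rule sum_mono2) (use km in auto)
    also have "\<dots> = 1" by (rule sum_pmf_eq_1) (use sp in auto)
    finally show False using k by simp
  qed
  then obtain b where "b < k" "(\<Sum>a\<in>{b*m..<b*m+m}. pmf p a) \<le> 1 / real k" by blast
  moreover have "b * m + m \<le> n"
    using mult_right_mono[of "Suc b" k m] \<open>b < k\<close> km by simp
  ultimately show thesis using that by blast
qed

lemma divide_le_from_bounds:
  fixes P Q \<gamma> s :: real
  assumes P: "P \<le> 4 * \<gamma>" and Q: "\<gamma> * s / 2 \<le> Q" and "0 \<le> \<gamma>" "0 < s"
  shows "P / Q \<le> 8 / s"
proof (cases "\<gamma> = 0")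
  case True
  then have "P / Q \<le> 0" using P Q by (simp add: divide_nonpos_nonneg)
  moreover have "0 \<le> 8 / s" using \<open>0 < s\<close> by simp
  ultimately show ?thesis by linarith
next
  case False
  then have pos: "0 < \<gamma> * s / 2" using assms by simp
  have "P / Q \<le> 4 * \<gamma> / Q" using P Q pos by (intro divide_right_mono) auto
  also have "\<dots> \<le> 4 * \<gamma> / (\<gamma> * s / 2)" using Q pos assms by (intro divide_left_mono) auto
  also have "\<dots> = 8 / s" using False by (simp add: field_simps)
  finally show ?thesis .
qed

theorem theorem4:
  fixes n :: nat and \<pi> :: policy
  assumes "1 \<le> n"
    and "\<forall>x h v. set_pmf (\<pi> x h v) \<subseteq> {..<n}"
  shows "\<exists>E s0 rs. crd_mdp n E s0 rs \<and>
           (\<forall>nx. shortest_opts n E rs nx \<longrightarrow>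
              policy_value n (1 - 1 / sqrt n) E s0 rs nx \<pi> / opt_value n (1 - 1 / sqrt n) E s0 rs
                \<le> 8 / sqrt n)"
proof -
  note n = assms(1) and pol = assms(2)
  define \<gamma> where "\<gamma> = 1 - 1 / sqrt n"
  have g0: "0 \<le> \<gamma>" and g1: "\<gamma> < 1" unfolding \<gamma>_def using n by (auto simp: field_simps)
  obtain m k where k: "1 \<le> k" and km: "k * m \<le> n" and nm: "n \<le> m * m" and mk: "m - 1 \<le> 2 * k"
    using exists_sqrt_block_partition[OF n] .
  obtain M where M: "1 \<le> M" and nM: "real n * \<gamma> ^ M \<le> 1"
    using exists_pow_le_inverse[OF g0 g1 n] .
  let ?p = "\<pi> 0 [] (map (\<lambda>_. \<gamma>) [0..<n])"
  obtain lo where lom: "lo + m \<le> n" and block: "(\<Sum>a\<in>{lo..<lo+m}. pmf ?p a) \<le> 1 / real k"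
    using exists_light_block[OF k km] pol by blast
  have "real (m - 1) * (\<Sum>a\<in>{lo..<lo+m}. pmf ?p a) \<le> real (2 * k) * (1 / real k)"
    using block mk by (intro mult_mono) (auto simp: sum_nonneg)
  then have light: "real (m - 1) * (\<Sum>a\<in>{lo..<lo+m}. pmf ?p a) \<le> 2" using k by simp
  have opt: "\<gamma> * sqrt n / 2 \<le> opt_value n \<gamma> (hidden_block_graph n M lo m) 0 Suc"
    using discount_sum_ge[OF n nm] opt_value_hidden_block_graph_ge[OF lom g0 less_imp_le[OF g1], of M]
    unfolding \<gamma>_def by linarith
  show ?thesis
  proof (intro exI conjI allI impI)
    show "crd_mdp n (hidden_block_graph n M lo m) 0 Suc" by (rule crd_mdp_hidden_block_graph[OF M])
    fix nx assume "shortest_opts n (hidden_block_graph n M lo m) Suc nx"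
    from policy_value_hidden_block_graph_le[OF M lom g0 less_imp_le[OF g1] this pol nM light]
    show "policy_value n (1 - 1 / sqrt n) (hidden_block_graph n M lo m) 0 Suc nx \<pi>
        / opt_value n (1 - 1 / sqrt n) (hidden_block_graph n M lo m) 0 Suc \<le> 8 / sqrt n"
      using divide_le_from_bounds[OF _ opt g0] n unfolding \<gamma>_def by simp
  qed
qed

end
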